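(* Let $n\geq 2$ and $k\in\{0,1,\ldots,n\}$ be integers. For $x\in[0,1]$ let $c(x)=-\min\{x,1-x\}/(n-1)$ and $$p_{n,k}(x)=\binom{n}{k}\frac{x^{(k,c(x))}\,(1-x)^{(n-k,c(x))}}{1^{(n,c(x))}}.$$ Then $p_{n,k}$ is increasing on $[0,x^*_{n,k}]$ and decreasing on $[x^*_{n,k},1]$, where $$x^*_{n,k}=\begin{cases} x_{n,k}, & \text{if } k\leq \frac{n-1}{2},\\ \frac12, & \text{if } \frac{n-1}{2}<k<\frac{n+1}{2},\\ 1-x_{n,n-k}, & \text{if } k\geq\frac{n+1}{2},\end{cases}$$ and the numbers $x_{n,j}\in\left[\frac{j-1}{n-1},\frac{j}{n-1}\right]$, $j\in\{0,\ldots,n-1\}$, are as defined in the context.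
   Context: For real $y$ and $h$, the rising factorial with increment $h$ is $y^{(0,h)}=1$ and $y^{(m,h)}=y(y+h)\cdots(y+(m-1)h)$ for integers $m\geq1$. The quantity $p_{n,k}(x)$ is the probability that $k$ white balls are drawn in $n$ draws from a Pólya urn initially containing $x$ white and $1-x$ black "balls", where after each draw the drawn ball is returned together with $c(x)$ balls of the same colour. For integers $n\geq 2$ and $j\in\{0,\ldots,n-1\}$, let $$\varphi_{n,j}(x)=\sum_{i=0}^{n-1}\frac{1}{1-\frac{i}{n-1}x}-\sum_{i=0}^{n-j-1}\frac{1}{1-x-\frac{i}{n-1}x},\qquad x\in\left[0,\tfrac{n-1}{2n-j-2}\right),$$ and let $x_{n,j}$ be the (unique) number in $\left[\frac{j-1}{n-1},\frac{j}{n-1}\right]$ such that $\varphi_{n,j}$ is positive on $[0,x_{n,j})$ and negative on $\left(x_{n,j},\frac{n-1}{2n-j-2}\right)$; such a number exists. *)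

theory Defs
  imports Complex_Main
begin

definition rising_fact :: "real \<Rightarrow> nat \<Rightarrow> real \<Rightarrow> real" where
  "rising_fact y m h = (\<Prod>i<m. y + real i * h)"

definition polya_c :: "nat \<Rightarrow> real \<Rightarrow> real" where
  "polya_c n x = - min x (1 - x) / (real n - 1)"

definition polya_p :: "nat \<Rightarrow> nat \<Rightarrow> real \<Rightarrow> real" where
  "polya_p n k x = real (n choose k) *
     (rising_fact x k (polya_c n x) * rising_fact (1 - x) (n - k) (polya_c n x))
     / rising_fact 1 n (polya_c n x)"

definition phi :: "nat \<Rightarrow> nat \<Rightarrow> real \<Rightarrow> real" where
  "phi n j x = (\<Sum>i=0..n-1. 1 / (1 - real i / (real n - 1) * x))
             - (\<Sum>i=0..n-j-1. 1 / (1 - x - real i / (real n - 1) * x))"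

text \<open>Right end of the domain of phi n j.\<close>
definition phi_bound :: "nat \<Rightarrow> nat \<Rightarrow> real" where
  "phi_bound n j = (real n - 1) / (2 * real n - real j - 2)"

definition x_nj :: "nat \<Rightarrow> nat \<Rightarrow> real" where
  "x_nj n j = (THE x. (real j - 1) / (real n - 1) \<le> x \<and> x \<le> real j / (real n - 1) \<and>
      (\<forall>y. 0 \<le> y \<and> y < x \<longrightarrow> phi n j y > 0) \<and>
      (\<forall>y. x < y \<and> y < phi_bound n j \<longrightarrow> phi n j y < 0))"

definition x_star :: "nat \<Rightarrow> nat \<Rightarrow> real" where
  "x_star n k = (if real k \<le> (real n - 1) / 2 then x_nj n k
                 else if real k < (real n + 1) / 2 then 1 / 2
                 else 1 - x_nj n (n - k))"

end

theory Submission
  imports Defs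
begin

text \<open>
  On [0, 1/2] the replacement parameter is c(x) = -x/(n-1), so p_{n,k} is a quotient of products
  of affine functions of x and its logarithmic derivative is phi_{n,k}(x)/x; the interval [1/2, 1]
  is reduced to [0, 1/2] by the symmetry p_{n,k}(x) = p_{n,n-k}(1-x).
  The function (1-x) phi_{n,j}(x) is a signed sum of Moebius functions (1-x)/(1-cx), decreasing
  for c \<le> 1 and increasing for c \<ge> 1, with the signs arranged so that the whole sum is strictly
  decreasing; hence phi_{n,j} changes sign at most once. Comparing its two sums at j/(n-1) and
  (j-1)/(n-1) with Riemann sums of the integral of dt/(N^2 - m t) locates this sign change in
  [(j-1)/(n-1), j/(n-1)], and for 2j \<ge> n pairing the terms shows phi_{n,j}(1/2) \<ge> 0.
\<close>

lemma ln_diff_bounds: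
  fixes a b :: real
  assumes "0 < b" "b < a"
  shows "(a - b) / a \<le> ln a - ln b" "ln a - ln b \<le> (a - b) / b"
proof -
  have "ln (b / a) \<le> b / a - 1" using assms by (intro ln_le_minus_one) auto
  then show "(a - b) / a \<le> ln a - ln b" using assms by (simp add: ln_div field_simps)
  have "ln (a / b) \<le> a / b - 1" using assms by (intro ln_le_minus_one) auto
  then show "ln a - ln b \<le> (a - b) / b" using assms by (simp add: ln_div field_simps)
qed

lemma sum_inverse_affine_ln_bounds:
  fixes A m r :: real and p :: nat
  assumes m: "0 < m" and pos: "0 < A - m * (r + real p)"
  shows "m * (\<Sum>t<p. 1 / (A - m * (r + real t))) \<le> ln (A - m * r) - ln (A - m * (r + real p))"
    and "ln (A - m * r) - ln (A - m * (r + real p)) \<le> m * (\<Sum>t<p. 1 / (A - m * (r + real (Suc t))))"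
proof -
  define a where "a t = A - m * (r + real t)" for t
  have a_pos: "0 < a (Suc t)" "a (Suc t) < a t" if "t < p" for t
  proof -
    have "m * real (Suc t) \<le> m * real p" using m that by simp
    then show "0 < a (Suc t)" using pos by (simp add: a_def algebra_simps)
    show "a (Suc t) < a t" using m by (simp add: a_def algebra_simps)
  qed
  have step: "a t - a (Suc t) = m" for t by (simp add: a_def algebra_simps)
  have telescope: "ln (A - m * r) - ln (A - m * (r + real p)) = (\<Sum>t<p. ln (a t) - ln (a (Suc t)))"
    by (subst sum_lessThan_telescope') (simp add: a_def)
  show "m * (\<Sum>t<p. 1 / (A - m * (r + real t))) \<le> ln (A - m * r) - ln (A - m * (r + real p))"
    unfolding telescope sum_distrib_left
  proof (rule sum_mono)
    fix t assume "t \<in> {..<p}"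
    with ln_diff_bounds(1)[OF a_pos] step show "m * (1 / (A - m * (r + real t))) \<le> ln (a t) - ln (a (Suc t))"
      by (simp add: a_def)
  qed
  show "ln (A - m * r) - ln (A - m * (r + real p)) \<le> m * (\<Sum>t<p. 1 / (A - m * (r + real (Suc t))))"
    unfolding telescope sum_distrib_left
  proof (rule sum_mono)
    fix t assume "t \<in> {..<p}"
    with ln_diff_bounds(2)[OF a_pos] step show "ln (a t) - ln (a (Suc t)) \<le> m * (1 / (A - m * (r + real (Suc t))))"
      by (simp add: a_def)
  qed
qed

lemma moebius_antimono:
  fixes x y c :: real
  assumes "x \<le> y" "0 \<le> c" "c \<le> 1" "c * y < 1"
  shows "(1 - y) / (1 - c * y) \<le> (1 - x) / (1 - c * x)"
proof -
  have "c * x \<le> c * y" using assms by (intro mult_left_mono)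
  then have "0 < 1 - c * x" "0 < 1 - c * y" using assms by linarith+
  moreover have "(1 - y) * (1 - c * x) \<le> (1 - x) * (1 - c * y)"
  proof -
    have "(1 - x) * (1 - c * y) - (1 - y) * (1 - c * x) = (y - x) * (1 - c)"
      by (simp add: algebra_simps)
    moreover have "0 \<le> (y - x) * (1 - c)" using assms by simp
    ultimately show ?thesis by linarith
  qed
  ultimately show ?thesis by (simp add: divide_simps mult.commute)
qed

lemma moebius_mono:
  fixes x y c :: real
  assumes "x \<le> y" "1 \<le> c" "c * y < 1"
  shows "(1 - x) / (1 - c * x) \<le> (1 - y) / (1 - c * y)"
proof -
  have "c * x \<le> c * y" using assms by (intro mult_left_mono) auto
  then have "0 < 1 - c * x" "0 < 1 - c * y" using assms by linarith+
  moreover have "(1 - x) * (1 - c * y) \<le> (1 - y) * (1 - c * x)"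
  proof -
    have "(1 - y) * (1 - c * x) - (1 - x) * (1 - c * y) = (y - x) * (c - 1)"
      by (simp add: algebra_simps)
    moreover have "0 \<le> (y - x) * (c - 1)" using assms by simp
    ultimately show ?thesis by linarith
  qed
  ultimately show ?thesis by (simp add: divide_simps mult.commute)
qed

lemma has_field_derivative_rising_fact_affine:
  fixes a b c x :: real
  assumes "\<And>i. i < m \<Longrightarrow> a + (b + real i * c) * x \<noteq> 0"
  shows "((\<lambda>y. rising_fact (a + b * y) m (c * y)) has_field_derivative
           rising_fact (a + b * x) m (c * x) * (\<Sum>i<m. (b + real i * c) / (a + (b + real i * c) * x))) (at x)"
proof -
  have "(\<lambda>y. rising_fact (a + b * y) m (c * y)) = (\<lambda>y. \<Prod>i<m. a + (b + real i * c) * y)"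
    by (simp add: rising_fact_def algebra_simps)
  moreover have "rising_fact (a + b * x) m (c * x) = (\<Prod>i<m. a + (b + real i * c) * x)"
    by (simp add: rising_fact_def algebra_simps)
  ultimately show ?thesis
    using assms by (auto intro!: has_field_derivative_prod' derivative_eq_intros)
qed

lemma sum_log_deriv_affine:
  fixes s :: "nat \<Rightarrow> real"
  assumes "x \<noteq> 0" "\<And>i. i \<in> I \<Longrightarrow> 1 + s i * x \<noteq> 0"
  shows "(\<Sum>i\<in>I. s i / (1 + s i * x)) = (real (card I) - (\<Sum>i\<in>I. 1 / (1 + s i * x))) / x"
proof -
  have "s i / (1 + s i * x) = (1 - 1 / (1 + s i * x)) / x" if "i \<in> I" for i
  proof -
    have "1 - 1 / (1 + s i * x) = s i * x / (1 + s i * x)"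
      using assms(2)[OF that] by (simp add: field_simps)
    then show ?thesis using assms(1) by simp
  qed
  then show ?thesis
    by (simp add: sum_subtractf sum_divide_distrib[symmetric])
qed

lemma has_field_derivative_rising_fact_affine_one:
  fixes b c x :: real
  assumes "x \<noteq> 0" "\<And>i. i < m \<Longrightarrow> 1 + (b + real i * c) * x \<noteq> 0"
  shows "((\<lambda>y. rising_fact (1 + b * y) m (c * y)) has_field_derivative
           rising_fact (1 + b * x) m (c * x) * ((real m - (\<Sum>i<m. 1 / (1 + (b + real i * c) * x))) / x)) (at x)"
  using has_field_derivative_rising_fact_affine[of m 1 b c x] assms
    sum_log_deriv_affine[of x "{..<m}" "\<lambda>i. b + real i * c"] by simp

lemma has_field_derivative_divide_log:
  fixes f g :: "real \<Rightarrow> real"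
  assumes "(f has_field_derivative f x * s) (at x)" "(g has_field_derivative g x * t) (at x)" "g x \<noteq> 0"
  shows "((\<lambda>y. f y / g y) has_field_derivative f x / g x * (s - t)) (at x)"
  using assms by (auto intro!: derivative_eq_intros simp: field_simps power2_eq_square)

lemma monotone_on_reflect:
  fixes f :: "real \<Rightarrow> 'b::order"
  shows "antimono_on {a..b} f \<Longrightarrow> mono_on {c - b..c - a} (\<lambda>x. f (c - x))"
    and "mono_on {a..b} f \<Longrightarrow> antimono_on {c - b..c - a} (\<lambda>x. f (c - x))"
  unfolding monotone_on_def by (auto elim!: ballE[of _ _ "c - _"])

lemma monotone_on_Icc_join:
  fixes f :: "'a::linorder \<Rightarrow> 'b"
  assumes "transp ord" "monotone_on {a..b} (\<le>) ord f" "monotone_on {b..c} (\<le>) ord f"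
  shows "monotone_on {a..c} (\<le>) ord f"
proof (rule monotone_onI)
  fix r s assume rs: "r \<in> {a..c}" "s \<in> {a..c}" "r \<le> s"
  consider "s \<le> b" | "b \<le> r" | "r < b" "b < s" by fastforce
  then show "ord (f r) (f s)"
  proof cases
    case 3
    then have "ord (f r) (f b)" "ord (f b) (f s)"
      using assms(2,3) rs by (auto simp: monotone_on_def)
    then show ?thesis by (rule transpD[OF assms(1)])
  qed (use assms(2,3) rs in \<open>auto simp: monotone_on_def\<close>)
qed

definition phi_term :: "nat \<Rightarrow> real \<Rightarrow> nat \<Rightarrow> real" where
  "phi_term n x t = 1 / (1 - real t / (real n - 1) * x)"

lemma phi_eq_sum_phi_term:
  assumes "n \<ge> 2" "j < n"
  shows "phi n j x = (\<Sum>t<n. phi_term n x t) - (\<Sum>i<n-j. phi_term n x (n - 1 + i))"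
proof -
  have "1 - x - real i / (real n - 1) * x = 1 - real (n - 1 + i) / (real n - 1) * x" for i
    using assms by (simp add: of_nat_diff field_simps)
  moreover have "{0..n-1} = {..<n}" "{0..n-j-1} = {..<n-j}"
    using assms by auto
  ultimately show ?thesis
    unfolding phi_def phi_term_def by (simp only:)
qed

lemma phi_at_ratio:
  assumes "n \<ge> 2" "j < n"
  defines "N \<equiv> real n - 1"
  shows "phi n j (m / N) = N\<^sup>2 * ((\<Sum>t<n. 1 / (N\<^sup>2 - m * real t)) - (\<Sum>i<n-j. 1 / (N\<^sup>2 - m * (N + real i))))"
proof -
  have "N \<noteq> 0" using assms by simp
  then have at_ratio: "phi_term n (m / N) t = N\<^sup>2 / (N\<^sup>2 - m * real t)" for t
    unfolding phi_term_def N_def[symmetric] by (simp add: field_simps power2_eq_square)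
  have shift: "real (n - 1 + i) = N + real i" for i
    using assms by (simp add: of_nat_diff)
  have at_ratio_shift: "phi_term n (m / N) (n - 1 + i) = N\<^sup>2 / (N\<^sup>2 - m * (N + real i))" for i
    by (simp only: at_ratio shift)
  show ?thesis
    unfolding phi_eq_sum_phi_term[OF assms(1,2)] at_ratio_shift
    unfolding at_ratio by (simp add: sum_distrib_left right_diff_distrib)
qed

lemma phi_at_j_nonpos:
  assumes n: "n \<ge> 2" and j: "1 \<le> j" "j + 1 < n"
  shows "phi n j (real j / (real n - 1)) \<le> 0"
proof -
  define N where "N = real n - 1"
  define a where "a t = N\<^sup>2 - real j * t" for t
  have jN: "0 < real j" "real j < N" using j by (auto simp: N_def)
  have first: "(\<Sum>t<n. 1 / a (real t)) = (\<Sum>t<n-1. 1 / a (real t)) + 1 / a N"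
    using n by (cases n) (auto simp: N_def)
  have second: "(\<Sum>i<n-j. 1 / a (N + real i)) = 1 / a N + (\<Sum>i<n-j-1. 1 / a (N + real (Suc i)))"
  proof -
    have "n - j = Suc (n - j - 1)" using j by simp
    then show ?thesis by (subst (1) \<open>n - j = _\<close>, subst sum.lessThan_Suc_shift) simp
  qed
  have lower: "real j * (\<Sum>t<n-1. 1 / a (real t)) \<le> ln (a 0) - ln (a N)"
  proof -
    have "real (n - 1) = N" using n by (simp add: N_def of_nat_diff)
    moreover have "0 < N\<^sup>2 - real j * N" using jN by (simp add: power2_eq_square)
    ultimately show ?thesis
      using sum_inverse_affine_ln_bounds(1)[of "real j" "N\<^sup>2" 0 "n - 1"] jN by (simp add: a_def)
  qed
  have upper: "ln (a N) - ln (a (2 * N - real j)) \<le> real j * (\<Sum>i<n-j-1. 1 / a (N + real (Suc i)))"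
  proof -
    have "N + real (n - j - 1) = 2 * N - real j" using j by (simp add: N_def of_nat_diff)
    moreover have "N\<^sup>2 - real j * (2 * N - real j) = (N - real j)\<^sup>2"
      by (simp add: power2_eq_square algebra_simps)
    then have "0 < N\<^sup>2 - real j * (2 * N - real j)" using jN by simp
    ultimately show ?thesis
      using sum_inverse_affine_ln_bounds(2)[of "real j" "N\<^sup>2" N "n - j - 1"] jN
      by (simp add: a_def add.assoc)
  qed
  have "a 0 = N * N" "a N = N * (N - real j)" "a (2 * N - real j) = (N - real j) * (N - real j)"
    by (simp_all add: a_def power2_eq_square algebra_simps)
  then have "ln (a 0) - ln (a N) = ln (a N) - ln (a (2 * N - real j))"
    using jN by (simp add: ln_mult)
  with lower upper have "real j * (\<Sum>t<n-1. 1 / a (real t)) \<le> real j * (\<Sum>i<n-j-1. 1 / a (N + real (Suc i)))"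
    by linarith
  then have "(\<Sum>t<n-1. 1 / a (real t)) \<le> (\<Sum>i<n-j-1. 1 / a (N + real (Suc i)))"
    using jN by simp
  then show ?thesis
    using phi_at_ratio[OF n, of j "real j"] j unfolding N_def[symmetric] a_def[symmetric]
    by (simp add: first second mult_le_0_iff)
qed

lemma phi_at_j_minus_one_nonneg:
  assumes n: "n \<ge> 2" and j: "2 \<le> j" "j + 1 < n"
  shows "0 \<le> phi n j ((real j - 1) / (real n - 1))"
proof -
  define N where "N = real n - 1"
  define m where "m = real j - 1"
  define a where "a t = N\<^sup>2 - m * t" for t
  have mN: "1 \<le> m" "m < N" using j by (auto simp: N_def m_def)
  have upper: "ln (a (- 1)) - ln (a N) \<le> m * (\<Sum>t<n. 1 / a (real t))"
  proof -
    have "- 1 + real n = N" by (simp add: N_def)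
    moreover have "0 < N\<^sup>2 - m * N" using mN by (simp add: power2_eq_square)
    ultimately show ?thesis
      using sum_inverse_affine_ln_bounds(2)[of m "N\<^sup>2" "- 1" n] mN by (simp add: a_def)
  qed
  have lower: "m * (\<Sum>i<n-j. 1 / a (N + real i)) \<le> ln (a N) - ln (a (2 * N - m))"
  proof -
    have "N + real (n - j) = 2 * N - m" using j by (simp add: N_def m_def of_nat_diff)
    moreover have "N\<^sup>2 - m * (2 * N - m) = (N - m)\<^sup>2"
      by (simp add: power2_eq_square algebra_simps)
    then have "0 < N\<^sup>2 - m * (2 * N - m)" using mN by simp
    ultimately show ?thesis
      using sum_inverse_affine_ln_bounds(1)[of m "N\<^sup>2" N "n - j"] mN by (simp add: a_def)
  qed
  have "ln (a N) - ln (a (2 * N - m)) \<le> ln (a (- 1)) - ln (a N)"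
  proof -
    have "a (- 1) = N * N + m" "a N = N * (N - m)" "a (2 * N - m) = (N - m) * (N - m)"
      by (simp_all add: a_def power2_eq_square algebra_simps)
    moreover have "ln (N * N) \<le> ln (N * N + m)"
      using mN by (intro ln_mono) auto
    ultimately show ?thesis
      using mN by (simp add: ln_mult)
  qed
  with lower upper have "m * (\<Sum>i<n-j. 1 / a (N + real i)) \<le> m * (\<Sum>t<n. 1 / a (real t))"
    by linarith
  then have "(\<Sum>i<n-j. 1 / a (N + real i)) \<le> (\<Sum>t<n. 1 / a (real t))"
    using mN by simp
  then show ?thesis
    using phi_at_ratio[OF n, of j m] j unfolding N_def[symmetric] m_def[symmetric] a_def[symmetric]
    by simp
qed

lemma phi_half_nonneg:
  assumes n: "n \<ge> 2" and j: "n \<le> 2 * j" "j < n"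
  shows "0 \<le> phi n j (1/2)"
proof -
  define N where "N = real n - 1"
  have N: "1 \<le> N" using n by (simp add: N_def)
  have half: "phi_term n (1/2) t = 2 * N / (2 * N - real t)" for t
    unfolding phi_term_def N_def[symmetric] using N by (simp add: field_simps)
  have pair: "phi_term n (1/2) (n - 1 + i) \<le> phi_term n (1/2) (2 * i) + phi_term n (1/2) (2 * i + 1)"
    if "i < n - j" for i
  proof -
    from that j have "2 * i + 1 \<le> n - 1" by auto
    then have i: "2 * real i + 1 \<le> N" using n by (simp add: N_def of_nat_diff)
    have shift: "real (n - 1 + i) = N + real i" using n by (simp add: N_def of_nat_diff)
    have "phi_term n (1/2) (n - 1 + i) = 2 * (2 * N / (2 * N - 2 * real i))"
      unfolding half shift using i N by (simp add: field_simps)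
    also have "\<dots> \<le> 2 * N / (2 * N - 2 * real i) + 2 * N / (2 * N - 2 * real i - 1)"
    proof -
      have "2 * N / (2 * N - 2 * real i) \<le> 2 * N / (2 * N - 2 * real i - 1)"
        using i N by (intro divide_left_mono) auto
      then show ?thesis by linarith
    qed
    also have "\<dots> = phi_term n (1/2) (2 * i) + phi_term n (1/2) (2 * i + 1)"
      unfolding half by (simp add: algebra_simps)
    finally show ?thesis .
  qed
  have pairs: "(\<Sum>i<q. f (2 * i) + f (2 * i + 1)) = (\<Sum>t<2 * q. f t)" for f :: "nat \<Rightarrow> real" and q
    by (induction q) (simp_all add: algebra_simps)
  have "(\<Sum>i<n-j. phi_term n (1/2) (n - 1 + i))
      \<le> (\<Sum>i<n-j. phi_term n (1/2) (2 * i) + phi_term n (1/2) (2 * i + 1))"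
    using pair by (intro sum_mono) auto
  also have "\<dots> = (\<Sum>t<2 * (n - j). phi_term n (1/2) t)"
    by (rule pairs)
  also have "\<dots> \<le> (\<Sum>t<n. phi_term n (1/2) t)"
  proof (rule sum_mono2)
    fix t assume "t \<in> {..<n} - {..<2 * (n - j)}"
    then have "real t \<le> N" using n by (auto simp: N_def)
    then show "0 \<le> phi_term n (1/2) t" unfolding half using N by simp
  qed (use j in auto)
  finally show ?thesis
    unfolding phi_eq_sum_phi_term[OF n j(2)] by simp
qed

lemma phi_bound_eq:
  assumes "n \<ge> 2" "j < n"
  shows "phi_bound n j = (real n - 1) / (2 * (real n - 1) - real j)"
    and "0 < 2 * (real n - 1) - real j"
  using assms by (auto simp: phi_bound_def algebra_simps)

lemma phi_bound_le_one:
  assumes "n \<ge> 2" "j < n"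
  shows "phi_bound n j \<le> 1"
  unfolding phi_bound_eq(1)[OF assms] using phi_bound_eq(2)[OF assms] assms by (simp add: divide_simps)

lemma half_le_phi_bound:
  assumes "n \<ge> 2" "j < n"
  shows "1/2 \<le> phi_bound n j"
  unfolding phi_bound_eq(1)[OF assms] using phi_bound_eq(2)[OF assms] assms by (simp add: divide_simps)

lemma half_less_phi_bound:
  assumes "n \<ge> 2" "0 < j" "j < n"
  shows "1/2 < phi_bound n j"
  unfolding phi_bound_eq(1)[OF assms(1,3)] using phi_bound_eq(2)[OF assms(1,3)] assms
  by (simp add: divide_simps)

lemma phi_term_denom_pos:
  assumes n: "n \<ge> 2" "j < n" and x: "0 \<le> x" "x < phi_bound n j"
    and t: "real t \<le> 2 * (real n - 1) - real j"
  shows "0 < 1 - real t / (real n - 1) * x"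
proof (cases "t = 0")
  case False
  define N D where "N = real n - 1" and "D = 2 * (real n - 1) - real j"
  have "0 < N" "0 < D" "phi_bound n j = N / D"
    using phi_bound_eq[OF n] n by (auto simp: N_def D_def)
  then have "real t / N * x < real t / N * (N / D)"
    using False x by (intro mult_strict_left_mono) auto
  also have "\<dots> = real t / D" using \<open>0 < N\<close> by simp
  also have "\<dots> \<le> 1" using t \<open>0 < D\<close> by (simp add: D_def)
  finally show ?thesis by (simp add: N_def)
qed simp

lemma one_minus_mult_phi_strict_decreasing:
  assumes n: "n \<ge> 2" "j < n" and xy: "0 \<le> x" "x < y" "y < phi_bound n j"
  shows "(1 - y) * phi n j y < (1 - x) * phi n j x"
proof -
  define N where "N = real n - 1"
  have N: "0 < N" using n by (simp add: N_def)
  have slope: "real t / N * z < 1" if "z = x \<or> z = y" "real t \<le> 2 * N - real j" for z t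
    using phi_term_denom_pos[OF n, of z t] that xy by (auto simp: N_def)
  have moebius: "(1 - z) * phi_term n z t = (1 - z) / (1 - real t / N * z)" for z t
    by (simp add: phi_term_def N_def)
  have "(\<Sum>t<n. (1 - y) * phi_term n y t) < (\<Sum>t<n. (1 - x) * phi_term n x t)"
  proof (rule sum_strict_mono_ex1)
    show "\<forall>t\<in>{..<n}. (1 - y) * phi_term n y t \<le> (1 - x) * phi_term n x t"
    proof
      fix t assume "t \<in> {..<n}"
      then have "real t \<le> N" using n by (auto simp: N_def)
      then show "(1 - y) * phi_term n y t \<le> (1 - x) * phi_term n x t"
        unfolding moebius using N n slope[of y t] xy
        by (intro moebius_antimono) (auto simp: N_def)
    qed
    show "\<exists>t\<in>{..<n}. (1 - y) * phi_term n y t < (1 - x) * phi_term n x t"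
      using xy n by (intro bexI[of _ 0]) (auto simp: phi_term_def)
  qed simp
  moreover have "(\<Sum>i<n-j. (1 - x) * phi_term n x (n - 1 + i)) \<le> (\<Sum>i<n-j. (1 - y) * phi_term n y (n - 1 + i))"
  proof (rule sum_mono)
    fix i assume "i \<in> {..<n-j}"
    then have "real (n - 1 + i) = N + real i" "N + real i \<le> 2 * N - real j"
      using n by (auto simp: N_def of_nat_diff)
    then show "(1 - x) * phi_term n x (n - 1 + i) \<le> (1 - y) * phi_term n y (n - 1 + i)"
      unfolding moebius using N slope[of y "n - 1 + i"] xy
      by (intro moebius_mono) auto
  qed
  ultimately show ?thesis
    unfolding phi_eq_sum_phi_term[OF n] by (simp add: right_diff_distrib sum_distrib_left)
qed

lemma continuous_on_phi:
  assumes n: "n \<ge> 2" "j < n"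
  shows "continuous_on {0..<phi_bound n j} (phi n j)"
proof -
  have nonzero: "1 - real t / (real n - 1) * x \<noteq> 0"
    if "x \<in> {0..<phi_bound n j}" "real t \<le> 2 * (real n - 1) - real j" for x t
  proof -
    have "0 < 1 - real t / (real n - 1) * x"
      using that by (intro phi_term_denom_pos[OF n]) auto
    then show ?thesis by linarith
  qed
  have "continuous_on {0..<phi_bound n j}
      (\<lambda>x. (\<Sum>t<n. phi_term n x t) - (\<Sum>i<n-j. phi_term n x (n - 1 + i)))"
    unfolding phi_term_def
  proof (intro continuous_intros ballI)
    fix x t assume "x \<in> {0..<phi_bound n j}" "t \<in> {..<n}"
    then show "1 - real t / (real n - 1) * x \<noteq> 0"
      using n by (intro nonzero) auto
  next
    fix x i assume "x \<in> {0..<phi_bound n j}" "i \<in> {..<n-j}"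
    then show "1 - real (n - 1 + i) / (real n - 1) * x \<noteq> 0"
      using n by (intro nonzero) (auto simp: of_nat_diff)
  qed
  then show ?thesis
    using phi_eq_sum_phi_term[OF n] by simp
qed

lemma phi_sign_around_zero:
  assumes n: "n \<ge> 2" "j < n" and r: "0 \<le> r" "r < phi_bound n j" "phi n j r = 0"
  shows "\<And>y. 0 \<le> y \<Longrightarrow> y < r \<Longrightarrow> 0 < phi n j y"
    and "\<And>y. r < y \<Longrightarrow> y < phi_bound n j \<Longrightarrow> phi n j y < 0"
proof -
  have below_one: "0 < 1 - y" if "y < phi_bound n j" for y
    using that phi_bound_le_one[OF n] by linarith
  fix y
  show "0 < phi n j y" if "0 \<le> y" "y < r"
  proof -
    have "0 < (1 - y) * phi n j y"
      using one_minus_mult_phi_strict_decreasing[OF n that r(2)] r(3) by simp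
    with below_one[of y] that r show ?thesis by (simp add: zero_less_mult_iff)
  qed
  show "phi n j y < 0" if "r < y" "y < phi_bound n j"
  proof -
    have "(1 - y) * phi n j y < 0"
      using one_minus_mult_phi_strict_decreasing[OF n r(1) that] r(3) by simp
    with below_one[of y] that show ?thesis by (simp add: mult_less_0_iff)
  qed
qed

lemma phi_has_zero:
  assumes n: "n \<ge> 2" and j: "2 * j + 1 \<le> n"
  obtains r where "(real j - 1) / (real n - 1) \<le> r" "0 \<le> r" "r \<le> real j / (real n - 1)"
    "r < phi_bound n j" "phi n j r = 0"
proof (cases "j = 0")
  case True
  then show ?thesis
    using that[of 0] n phi_bound_eq[of n 0] by (simp add: phi_def)
next
  case False
  define N where "N = real n - 1"
  have jN: "1 \<le> real j" "2 * real j + 1 \<le> real n" using False j by linarith+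
  then have N: "0 < N" "real j < N" by (auto simp: N_def)
  have jn: "j < n" using j by simp
  have "real j / N < phi_bound n j"
  proof -
    have "(N - real j)\<^sup>2 > 0" using N by simp
    then have "real j * (2 * N - real j) < N * N" by (simp add: power2_eq_square algebra_simps)
    moreover have "0 < 2 * N - real j" using N by simp
    ultimately show ?thesis
      unfolding phi_bound_eq(1)[OF n jn] N_def[symmetric] using N by (simp add: divide_simps)
  qed
  moreover have lo: "0 \<le> (real j - 1) / N" "(real j - 1) / N \<le> real j / N"
    using jN N by (simp_all add: divide_right_mono)
  ultimately have "continuous_on {(real j - 1) / N .. real j / N} (phi n j)"
    using n j by (intro continuous_on_subset[OF continuous_on_phi]) auto
  moreover have "phi n j (real j / N) \<le> 0"
    using phi_at_j_nonpos[OF n] False j unfolding N_def by simp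
  moreover have "0 \<le> phi n j ((real j - 1) / N)"
  proof (cases "j = 1")
    case True
    then show ?thesis using n by (simp add: phi_def)
  next
    case False
    then show ?thesis using phi_at_j_minus_one_nonneg[OF n] \<open>j \<noteq> 0\<close> j unfolding N_def by simp
  qed
  ultimately obtain r where "(real j - 1) / N \<le> r" "r \<le> real j / N" "phi n j r = 0"
    using IVT2'[of "phi n j"] lo(2) by blast
  with lo \<open>real j / N < phi_bound n j\<close> show ?thesis
    using that unfolding N_def by simp
qed

lemma x_nj_props:
  assumes n: "n \<ge> 2" and j: "2 * j + 1 \<le> n"
  shows "0 \<le> x_nj n j" "x_nj n j \<le> 1/2"
    and "\<And>y. 0 \<le> y \<Longrightarrow> y < x_nj n j \<Longrightarrow> 0 < phi n j y"
    and "\<And>y. x_nj n j < y \<Longrightarrow> y < phi_bound n j \<Longrightarrow> phi n j y < 0"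
proof -
  have jn: "j < n" using j by simp
  obtain r where r: "(real j - 1) / (real n - 1) \<le> r" "0 \<le> r" "r \<le> real j / (real n - 1)"
    "r < phi_bound n j" "phi n j r = 0"
    using phi_has_zero[OF n j] by blast
  note sign = phi_sign_around_zero[OF n jn r(2,4,5)]
  have "x_nj n j = r"
    unfolding x_nj_def
  proof (rule the_equality)
    fix x assume P: "(real j - 1) / (real n - 1) \<le> x \<and> x \<le> real j / (real n - 1) \<and>
      (\<forall>y. 0 \<le> y \<and> y < x \<longrightarrow> 0 < phi n j y) \<and> (\<forall>y. x < y \<and> y < phi_bound n j \<longrightarrow> phi n j y < 0)"
    show "x = r"
    proof (rule ccontr)
      assume "x \<noteq> r"
      show False
      proof (cases "x < r")
        case True
        with P r show False by auto
      next
        case False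
        define y where "y = (r + min x (phi_bound n j)) / 2"
        have "r < y" "y < x" "y < phi_bound n j"
          using False \<open>x \<noteq> r\<close> r(4) by (auto simp: y_def)
        then have "phi n j y < 0" using sign(2) by blast
        moreover have "0 < phi n j y" using P \<open>r < y\<close> \<open>y < x\<close> r(2) by auto
        ultimately show False by simp
      qed
    qed
  qed (use r sign in auto)
  moreover have "real j / (real n - 1) \<le> 1/2"
    using n j by (simp add: divide_simps)
  ultimately show "0 \<le> x_nj n j" "x_nj n j \<le> 1/2"
    using r by linarith+
  show "\<And>y. 0 \<le> y \<Longrightarrow> y < x_nj n j \<Longrightarrow> 0 < phi n j y"
    and "\<And>y. x_nj n j < y \<Longrightarrow> y < phi_bound n j \<Longrightarrow> phi n j y < 0"
    using \<open>x_nj n j = r\<close> sign by auto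
qed

lemma phi_pos_left_half:
  assumes n: "n \<ge> 2" and j: "n \<le> 2 * j" "j < n" and x: "0 \<le> x" "x < 1/2"
  shows "0 < phi n j x"
proof -
  have "1/2 < phi_bound n j"
    using n j by (intro half_less_phi_bound) auto
  with x have "(1 - 1/2) * phi n j (1/2) < (1 - x) * phi n j x"
    by (intro one_minus_mult_phi_strict_decreasing[OF n j(2)])
  moreover have "0 \<le> (1 - 1/2) * phi n j (1/2)"
    using phi_half_nonneg[OF n j] by simp
  ultimately have "0 < (1 - x) * phi n j x" by linarith
  then show ?thesis using x by (simp add: zero_less_mult_iff)
qed

definition polya_p_left :: "nat \<Rightarrow> nat \<Rightarrow> real \<Rightarrow> real" where
  "polya_p_left n k x = real (n choose k) *
     (rising_fact x k (- x / (real n - 1)) * rising_fact (1 - x) (n - k) (- x / (real n - 1)))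
     / rising_fact 1 n (- x / (real n - 1))"

lemma polya_p_eq_polya_p_left:
  assumes "0 \<le> x" "x \<le> 1/2"
  shows "polya_p n k x = polya_p_left n k x"
proof -
  have "polya_c n x = - x / (real n - 1)"
    using assms by (simp add: polya_c_def min_def)
  then show ?thesis by (simp add: polya_p_def polya_p_left_def)
qed

lemma polya_factors_pos:
  assumes n: "n \<ge> 2" and x: "0 \<le> x" "x \<le> 1/2" and i: "i < n"
  shows "0 < 1 + real i * (- x / (real n - 1))"
    and "x < 1/2 \<Longrightarrow> 0 < 1 - x + real i * (- x / (real n - 1))"
    and "0 < x \<Longrightarrow> i < n - 1 \<Longrightarrow> 0 < x + real i * (- x / (real n - 1))"
proof -
  define N where "N = real n - 1"
  have N: "0 < N" "real i \<le> N" using n i by (auto simp: N_def)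
  have "real i * x \<le> N * x" using N x by (intro mult_right_mono) auto
  then have ix: "real i * (x / N) \<le> x"
    using N by (simp add: divide_simps mult.commute)
  show "0 < 1 + real i * (- x / (real n - 1))"
    using ix x unfolding N_def[symmetric] by simp
  show "0 < 1 - x + real i * (- x / (real n - 1))" if "x < 1/2"
    using ix that unfolding N_def[symmetric] by simp
  show "0 < x + real i * (- x / (real n - 1))" if "0 < x" "i < n - 1"
  proof -
    have "real i < N" using that n by (simp add: N_def of_nat_diff)
    then have "real i * (x / N) < x" using N \<open>0 < x\<close> by (simp add: divide_simps)
    then show ?thesis unfolding N_def[symmetric] by simp
  qed
qed

lemma rising_fact_polya_top_zero:
  assumes "n \<ge> 2"
  shows "rising_fact x n (- x / (real n - 1)) = 0"
  unfolding rising_fact_def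
  using assms by (intro prod_zero bexI[of _ "n - 1"]) (auto simp: of_nat_diff)

lemma polya_p_top_left_half:
  assumes "n \<ge> 2" "0 \<le> x" "x \<le> 1/2"
  shows "polya_p n n x = 0"
  using assms rising_fact_polya_top_zero[OF assms(1)]
  by (simp add: polya_p_eq_polya_p_left polya_p_left_def)

lemma polya_p_pos:
  assumes n: "n \<ge> 2" and k: "k < n" and x: "0 < x" "x < 1/2"
  shows "0 < polya_p n k x"
proof -
  have "0 < rising_fact x k (- x / (real n - 1))"
    unfolding rising_fact_def using k x by (intro prod_pos polya_factors_pos(3)[OF n]) auto
  moreover have "0 < rising_fact (1 - x) (n - k) (- x / (real n - 1))"
    unfolding rising_fact_def using x by (intro prod_pos polya_factors_pos(2)[OF n]) auto
  moreover have "0 < rising_fact 1 n (- x / (real n - 1))"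
    unfolding rising_fact_def using x by (intro prod_pos polya_factors_pos(1)[OF n]) auto
  ultimately show ?thesis
    using x k by (simp add: polya_p_eq_polya_p_left polya_p_left_def)
qed

lemma continuous_on_polya_p:
  assumes "n \<ge> 2"
  shows "continuous_on {0..1/2} (polya_p n k)"
proof -
  have "continuous_on {0..1/2} (polya_p_left n k)"
    unfolding polya_p_left_def rising_fact_def
  proof (intro continuous_intros ballI)
    fix x :: real assume "x \<in> {0..1/2}"
    then have "0 < (\<Prod>i<n. 1 + real i * (- x / (real n - 1)))"
      by (intro prod_pos polya_factors_pos(1)[OF assms]) auto
    then show "(\<Prod>i<n. 1 + real i * (- x / (real n - 1))) \<noteq> 0" by (metis less_irrefl)
  qed (use assms in simp_all)
  then show ?thesis
    by (rule continuous_on_cong[THEN iffD1, rotated 2]) (auto simp: polya_p_eq_polya_p_left)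
qed

lemma polya_factors_has_derivative:
  assumes n: "n \<ge> 2" and k: "k < n" and x: "0 < x" "x < 1/2"
  defines "N \<equiv> real n - 1"
  shows "((\<lambda>y. rising_fact y k (- y / N)) has_field_derivative
           rising_fact x k (- x / N) * (real k / x)) (at x)"
    and "((\<lambda>y. rising_fact (1 - y) (n - k) (- y / N)) has_field_derivative
           rising_fact (1 - x) (n - k) (- x / N) * ((real (n - k) - (\<Sum>i<n-k. 1 / (1 - x - real i / N * x))) / x)) (at x)"
    and "((\<lambda>y. rising_fact 1 n (- y / N)) has_field_derivative
           rising_fact 1 n (- x / N) * ((real n - (\<Sum>i<n. 1 / (1 - real i / N * x))) / x)) (at x)"
proof -
  have N: "0 < N" using n by (simp add: N_def)
  have "0 + (1 + real i * (- 1 / N)) * x \<noteq> 0" if "i < k" for i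
  proof -
    have "0 < x + real i * (- x / N)"
      using polya_factors_pos(3)[OF n, of x i] that k x unfolding N_def by simp
    then show ?thesis by (simp add: algebra_simps)
  qed
  then show "((\<lambda>y. rising_fact y k (- y / N)) has_field_derivative
      rising_fact x k (- x / N) * (real k / x)) (at x)"
    using has_field_derivative_rising_fact_affine[of k 0 1 "- 1 / N" x] by simp
  have eq: "1 + (- 1 + real i * (- 1 / N)) * x = 1 - x - real i / N * x" for i
    by (simp add: algebra_simps)
  have "1 + (- 1 + real i * (- 1 / N)) * x \<noteq> 0" if "i < n - k" for i
  proof -
    have "0 < 1 - x + real i * (- x / N)"
      using polya_factors_pos(2)[OF n, of x i] that x unfolding N_def by simp
    then show ?thesis unfolding eq using N by (simp add: algebra_simps)
  qed
  from has_field_derivative_rising_fact_affine_one[OF _ this] x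
  show "((\<lambda>y. rising_fact (1 - y) (n - k) (- y / N)) has_field_derivative
      rising_fact (1 - x) (n - k) (- x / N) * ((real (n - k) - (\<Sum>i<n-k. 1 / (1 - x - real i / N * x))) / x)) (at x)"
    unfolding eq by simp
  have eq: "1 + (0 + real i * (- 1 / N)) * x = 1 - real i / N * x" for i
    by (simp add: algebra_simps)
  have "1 + (0 + real i * (- 1 / N)) * x \<noteq> 0" if "i < n" for i
  proof -
    have "0 < 1 + real i * (- x / N)"
      using polya_factors_pos(1)[OF n, of x i] that x unfolding N_def by simp
    then show ?thesis unfolding eq using N by (simp add: algebra_simps)
  qed
  from has_field_derivative_rising_fact_affine_one[OF _ this] x
  show "((\<lambda>y. rising_fact 1 n (- y / N)) has_field_derivative
      rising_fact 1 n (- x / N) * ((real n - (\<Sum>i<n. 1 / (1 - real i / N * x))) / x)) (at x)"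
    unfolding eq by simp
qed

lemma polya_p_has_derivative:
  assumes n: "n \<ge> 2" and k: "k < n" and x: "0 < x" "x < 1/2"
  shows "(polya_p n k has_field_derivative polya_p n k x * phi n k x / x) (at x)"
proof -
  define N where "N = real n - 1"
  define SB where "SB = (\<Sum>i<n-k. 1 / (1 - x - real i / N * x))"
  define SD where "SD = (\<Sum>i<n. 1 / (1 - real i / N * x))"
  note factors = polya_factors_has_derivative[OF n k x, folded N_def, folded SB_def SD_def]
  define A where "A y = rising_fact y k (- y / N)" for y
  define B where "B y = rising_fact (1 - y) (n - k) (- y / N)" for y
  define D where "D y = rising_fact 1 n (- y / N)" for y
  have "0 < D x"
    unfolding D_def rising_fact_def N_def using x by (intro prod_pos polya_factors_pos(1)[OF n]) auto
  moreover have "(D has_field_derivative D x * ((real n - SD) / x)) (at x)"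
    using factors(3) by (simp add: D_def[abs_def])
  moreover have "((\<lambda>y. real (n choose k) * (A y * B y)) has_field_derivative
      real (n choose k) * (A x * B x) * (real k / x + (real (n - k) - SB) / x)) (at x)"
    using factors(1,2) unfolding A_def[abs_def] B_def[abs_def]
    by (auto intro!: derivative_eq_intros simp: algebra_simps)
  ultimately have "((\<lambda>y. real (n choose k) * (A y * B y) / D y) has_field_derivative
      real (n choose k) * (A x * B x) / D x * (real k / x + (real (n - k) - SB) / x - (real n - SD) / x)) (at x)"
    by (intro has_field_derivative_divide_log) auto
  moreover have "polya_p_left n k = (\<lambda>y. real (n choose k) * (A y * B y) / D y)"
    by (simp add: fun_eq_iff polya_p_left_def A_def B_def D_def N_def)
  ultimately have "(polya_p_left n k has_field_derivative
      polya_p_left n k x * (real k / x + (real (n - k) - SB) / x - (real n - SD) / x)) (at x)"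
    by simp
  moreover have "real k / x + (real (n - k) - SB) / x - (real n - SD) / x = phi n k x / x"
  proof -
    have "{0..n-1} = {..<n}" "{0..n-k-1} = {..<n-k}" using n k by auto
    then have "phi n k x = SD - SB" by (simp add: phi_def SD_def SB_def N_def)
    then show ?thesis using k by (simp add: of_nat_diff diff_divide_distrib add_divide_distrib)
  qed
  moreover have "polya_p n k x = polya_p_left n k x"
    using x by (simp add: polya_p_eq_polya_p_left)
  ultimately have "(polya_p_left n k has_field_derivative polya_p n k x * phi n k x / x) (at x)"
    by simp
  then show ?thesis
    by (rule has_field_derivative_transform_within_open[of _ _ _ "{0<..<1/2}"])
      (use x in \<open>auto simp: polya_p_eq_polya_p_left\<close>)
qed

text \<open>
  The hypothesis on phi is only needed for k < n: phi n n is degenerate (its second sum has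
  the truncated upper index n - n - 1 = 0), while polya_p n n vanishes on [0, 1/2].
\<close>

lemma polya_p_mono_on:
  assumes n: "n \<ge> 2" "k \<le> n" and ab: "0 \<le> a" "b \<le> 1/2"
    and phi: "\<And>x. k < n \<Longrightarrow> a < x \<Longrightarrow> x < b \<Longrightarrow> 0 \<le> phi n k x"
  shows "mono_on {a..b} (polya_p n k)"
proof (cases "k = n")
  case True
  then show ?thesis
    using ab polya_p_top_left_half[OF n(1)] by (intro mono_onI) auto
next
  case False
  then have k: "k < n" using n by simp
  show ?thesis
  proof (rule mono_onI)
    fix r s assume rs: "r \<in> {a..b}" "s \<in> {a..b}" "r \<le> s"
    show "polya_p n k r \<le> polya_p n k s"
    proof (rule DERIV_nonneg_imp_increasing_open[OF rs(3)])
      fix z assume "r < z" "z < s"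
      with ab rs have z: "0 < z" "z < 1/2" "a < z" "z < b" by auto
      with phi[OF k, of z] polya_p_pos[OF n(1) k z(1,2)]
      have "0 \<le> polya_p n k z * phi n k z / z" by simp
      then show "\<exists>d. (polya_p n k has_real_derivative d) (at z) \<and> 0 \<le> d"
        using polya_p_has_derivative[OF n(1) k z(1,2)] by blast
    qed (use ab rs in \<open>auto intro: continuous_on_subset[OF continuous_on_polya_p[OF n(1)]]\<close>)
  qed
qed

lemma polya_p_antimono_on:
  assumes n: "n \<ge> 2" "k \<le> n" and ab: "0 \<le> a" "b \<le> 1/2"
    and phi: "\<And>x. k < n \<Longrightarrow> a < x \<Longrightarrow> x < b \<Longrightarrow> phi n k x \<le> 0"
  shows "antimono_on {a..b} (polya_p n k)"
proof (cases "k = n")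
  case True
  then show ?thesis
    using ab polya_p_top_left_half[OF n(1)] by (intro monotone_onI) auto
next
  case False
  then have k: "k < n" using n by simp
  show ?thesis
  proof (rule monotone_onI)
    fix r s assume rs: "r \<in> {a..b}" "s \<in> {a..b}" "r \<le> s"
    show "polya_p n k s \<le> polya_p n k r"
    proof (rule DERIV_nonpos_imp_decreasing_open[OF rs(3)])
      fix z assume "r < z" "z < s"
      with ab rs have z: "0 < z" "z < 1/2" "a < z" "z < b" by auto
      with phi[OF k, of z] polya_p_pos[OF n(1) k z(1,2)]
      have "polya_p n k z * phi n k z / z \<le> 0" by (simp add: divide_nonpos_pos mult_nonneg_nonpos)
      then show "\<exists>d. (polya_p n k has_real_derivative d) (at z) \<and> d \<le> 0"
        using polya_p_has_derivative[OF n(1) k z(1,2)] by blast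
    qed (use ab rs in \<open>auto intro: continuous_on_subset[OF continuous_on_polya_p[OF n(1)]]\<close>)
  qed
qed

lemma polya_p_reflect:
  assumes "k \<le> n"
  shows "polya_p n k x = polya_p n (n - k) (1 - x)"
proof -
  have "polya_c n (1 - x) = polya_c n x" unfolding polya_c_def by (simp add: min.commute)
  moreover have "n choose (n - k) = n choose k" using assms by (simp add: binomial_symmetric[symmetric])
  ultimately show ?thesis unfolding polya_p_def using assms by (simp add: mult.commute)
qed

lemma polya_p_mono_on_left_half:
  assumes n: "n \<ge> 2" "k \<le> n" and k: "n \<le> 2 * k"
  shows "mono_on {0..1/2} (polya_p n k)"
proof (rule polya_p_mono_on[OF n])
  show "0 \<le> phi n k x" if "k < n" "0 < x" "x < 1/2" for x
    using that by (intro less_imp_le phi_pos_left_half[OF n(1) k that(1)]) auto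
qed auto

lemma polya_p_antimono_on_right_half:
  assumes n: "n \<ge> 2" and k: "2 * k \<le> n"
  shows "antimono_on {1/2..1} (polya_p n k)"
proof -
  have "mono_on {0..1/2} (polya_p n (n - k))"
    using n k by (intro polya_p_mono_on_left_half) auto
  from monotone_on_reflect(2)[OF this, of 1] have "antimono_on {1/2..1} (\<lambda>x. polya_p n (n - k) (1 - x))"
    by simp
  moreover have "polya_p n k = (\<lambda>x. polya_p n (n - k) (1 - x))"
    using k by (intro ext polya_p_reflect) simp
  ultimately show ?thesis by simp
qed

lemma polya_p_unimodal_left_half:
  assumes n: "n \<ge> 2" and k: "2 * k + 1 \<le> n"
  shows "mono_on {0..x_nj n k} (polya_p n k)" "antimono_on {x_nj n k..1/2} (polya_p n k)"
proof -
  note x = x_nj_props[OF n k]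
  have "k < n" using k by simp
  show "mono_on {0..x_nj n k} (polya_p n k)"
    using x n k by (intro polya_p_mono_on) (auto intro: less_imp_le)
  show "antimono_on {x_nj n k..1/2} (polya_p n k)"
    using x n k half_le_phi_bound[OF n \<open>k < n\<close>] by (intro polya_p_antimono_on) (auto intro: less_imp_le)
qed

lemma polya_p_unimodal_small_k:
  assumes n: "n \<ge> 2" and k: "2 * k + 1 \<le> n"
  shows "mono_on {0..x_nj n k} (polya_p n k) \<and> antimono_on {x_nj n k..1} (polya_p n k)"
  using polya_p_unimodal_left_half[OF n k] polya_p_antimono_on_right_half[OF n] x_nj_props(2)[OF n k] k
  by (auto intro: monotone_on_Icc_join[OF transp_on_ge])

lemma polya_p_unimodal_large_k:
  assumes n: "n \<ge> 2" "k \<le> n" and k: "n + 1 \<le> 2 * k"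
  defines "c \<equiv> 1 - x_nj n (n - k)"
  shows "mono_on {0..c} (polya_p n k) \<and> antimono_on {c..1} (polya_p n k)"
proof -
  have j: "2 * (n - k) + 1 \<le> n" using n(2) k by simp
  have reflect: "polya_p n k = (\<lambda>x. polya_p n (n - k) (1 - x))"
    using polya_p_reflect[OF n(2)] by auto
  note unimodal = polya_p_unimodal_left_half[OF n(1) j]
  have "mono_on {1/2..c} (polya_p n k)"
    using monotone_on_reflect(1)[OF unimodal(2), of 1] unfolding reflect c_def by simp
  with polya_p_mono_on_left_half[OF n] k x_nj_props(2)[OF n(1) j]
  have "mono_on {0..c} (polya_p n k)"
    by (auto intro: monotone_on_Icc_join[OF transp_on_le])
  moreover have "antimono_on {c..1} (polya_p n k)"
    using monotone_on_reflect(2)[OF unimodal(1), of 1] unfolding reflect c_def by simp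
  ultimately show ?thesis ..
qed

theorem theorem3p1:
  fixes n k :: nat
  assumes "n \<ge> 2" and "k \<le> n"
  shows "mono_on {0..x_star n k} (polya_p n k) \<and> antimono_on {x_star n k..1} (polya_p n k)"
proof -
  consider "2 * k + 1 \<le> n" | "2 * k = n" | "n + 1 \<le> 2 * k" by linarith
  then show ?thesis
  proof cases
    case 1
    then have "x_star n k = x_nj n k" by (simp add: x_star_def)
    with polya_p_unimodal_small_k[OF assms(1) 1] show ?thesis by simp
  next
    case 2
    then have "x_star n k = 1/2" by (simp add: x_star_def)
    moreover have "mono_on {0..1/2} (polya_p n k)" "antimono_on {1/2..1} (polya_p n k)"
      using polya_p_mono_on_left_half[OF assms] polya_p_antimono_on_right_half[OF assms(1)] 2 by simp_all
    ultimately show ?thesis by (simp only:)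
  next
    case 3
    then have "x_star n k = 1 - x_nj n (n - k)" by (simp add: x_star_def)
    with polya_p_unimodal_large_k[OF assms 3] show ?thesis by simp
  qed
qed

end
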